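(* Let $f:\mathbb{R}^n\to\mathbb{R}$ be bounded below and twice continuously differentiable with $\nabla^2f$ Lipschitz with constant $L_{\nabla^2f}$. Let $x\in\mathbb{R}^n$, $\Delta>0$, $p=(n+1)(n+2)/2$, points $y_1,\ldots,y_p$ with $\|y_i-x\|\le\beta\Delta$ for some $\beta>0$ and all $i$, and suppose that the matrix $\hat Q$ with rows $\phi((y_i-x)/\Delta)^T$ is invertible. Let $m$ be the quadratic interpolant of $f$ at $y_1,\ldots,y_p$, let $\ell_1,\ldots,\ell_p$ be the associated quadratic Lagrange polynomials, and suppose $\max_{y\in B(x,\Delta)}\sum_{i=1}^p|\ell_i(y)|\le\Lambda_1$. Then for all $y\in B(x,\Delta)$: $|m(y)-f(y)|\le\kappa_{\mathrm{mf}}\Delta^3$, $\|\nabla m(y)-\nabla f(y)\|\le\kappa_{\mathrm{mg}}\Delta^2$, $\|\nabla^2m(y)-\nabla^2f(y)\|\le\kappa_{\mathrm{mh}}\Delta$, with $$\kappa_{\mathrm{mf}}=\tfrac16L_{\nabla^2f}\beta^3\Lambda_1+\tfrac{L_{\nabla^2f}}{6},\quad\kappa_{\mathrm{mg}}=\tfrac{17}{3}L_{\nabla^2f}\beta^3\Lambda_1+\tfrac{L_{\nabla^2f}}{2},\quad\kappa_{\mathrm{mh}}=4L_{\nabla^2f}\beta^3\Lambda_1+L_{\nabla^2f}.$$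
   Context: $\phi(z)=[1,z_1,\ldots,z_n,\tfrac12z_1^2,z_1z_2,\ldots,z_1z_n,\tfrac12z_2^2,\ldots,z_{n-1}z_n,\tfrac12z_n^2]^T$ is the natural quadratic basis; invertibility of $\hat Q$ means there is a unique quadratic $m(y)=c+g^T(y-x)+\tfrac12(y-x)^TH(y-x)$ ($H$ symmetric) with $m(y_i)=f(y_i)$ for all $i$ (the quadratic interpolant), and unique quadratics $\ell_i$ with $\ell_i(y_j)=\delta_{ij}$ (the Lagrange polynomials). Norms Euclidean/operator 2-norm; $B(x,\Delta)=\{y:\|y-x\|\le\Delta\}$. *)

theory Defs
  imports "HOL-Analysis.Analysis"
begin

text \<open>Index set of the natural quadratic basis phi on R^n:
  QC = constant 1, QL i = z_i, QQ S for S = {i,j} a set of one or two coordinates: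
  S = {i} gives (1/2) z_i^2, S = {i,j} with i \<noteq> j gives z_i z_j.
  (The order of the components is irrelevant for invertibility.)\<close>
datatype 'n qidx = QC | QL 'n | QQ "'n set"

definition qbasis :: "'n qidx set" where
  "qbasis = {QC} \<union> range QL \<union> {QQ {i, j} | i j. True}"

fun phi :: "real^'n \<Rightarrow> 'n qidx \<Rightarrow> real" where
  "phi z QC = 1"
| "phi z (QL i) = z $ i"
| "phi z (QQ S) = (if card S = 1 then (z $ the_elem S)^2 / 2 else (\<Prod>i\<in>S. z $ i))"

definition Qhat :: "real^'n \<Rightarrow> real \<Rightarrow> ('p \<Rightarrow> real^'n) \<Rightarrow> 'p \<Rightarrow> 'n qidx \<Rightarrow> real" where
  "Qhat x \<Delta> y k b = phi ((1 / \<Delta>) *\<^sub>R (y k - x)) b"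

definition qmat_invertible :: "('p::finite \<Rightarrow> 'n::finite qidx \<Rightarrow> real) \<Rightarrow> bool" where
  "qmat_invertible Q \<longleftrightarrow> (\<exists>R :: 'n qidx \<Rightarrow> 'p \<Rightarrow> real.
      (\<forall>b\<in>qbasis. \<forall>b'\<in>qbasis. (\<Sum>k\<in>UNIV. R b k * Q k b') = (if b = b' then 1 else 0)) \<and>
      (\<forall>k k'. (\<Sum>b\<in>qbasis. Q k b * R b k') = (if k = k' then 1 else 0)))"

definition quad :: "real \<Rightarrow> real^'n \<Rightarrow> real^'n^'n \<Rightarrow> real^'n \<Rightarrow> real^'n \<Rightarrow> real" where
  "quad c g H x y = c + g \<bullet> (y - x) + (1/2) * ((y - x) \<bullet> (H *v (y - x)))"

definition opnorm :: "real^'n^'m \<Rightarrow> real" where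
  "opnorm A = onorm (\<lambda>v. A *v v)"

end

(* Let T be the second-order Taylor polynomial of f at x. Lipschitz continuity of the
   Hessian gives |f - T| <= L/6 |. - x|^3, so the quadratic q = m - T is at most
   L/6 (beta Delta)^3 in absolute value at the interpolation points. As Qhat is invertible,
   q coincides with its Lagrange interpolant sum_i q(y_i) l_i, hence |q| <= L/6 beta^3
   Lambda_1 Delta^3 on B(x, Delta). Evaluating q at x and x +- Delta v bounds the gradient
   and (the Hessian of f being symmetric) the Hessian of q; adding the Taylor errors of f,
   of its gradient and of its Hessian gives the three estimates. *)

theory Submission
  imports Defs
begin

section \<open>Operator norms of matrices\<close>

lemma norm_matrix_vector_le_opnorm: "norm (A *v v) \<le> opnorm A * norm v"
  unfolding opnorm_def by (rule onorm[OF matrix_vector_mul_bounded_linear])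

lemma opnorm_le: "(\<And>v. norm (A *v v) \<le> b * norm v) \<Longrightarrow> opnorm A \<le> b"
  unfolding opnorm_def by (rule onorm_le)

lemma opnorm_nonneg: "0 \<le> opnorm A"
  unfolding opnorm_def by (rule onorm_pos_le[OF matrix_vector_mul_bounded_linear])

lemma opnorm_add_le: "opnorm (A + B) \<le> opnorm A + opnorm B"
  unfolding opnorm_def matrix_vector_mult_add_rdistrib
  by (intro onorm_triangle matrix_vector_mul_bounded_linear)

lemma inner_matrix_vector_commute:
  fixes A :: "real^'n^'n"
  assumes "transpose A = A"
  shows "w \<bullet> (A *v u) = u \<bullet> (A *v w)"
  by (metis assms dot_lmul_matrix inner_commute transpose_matrix_vector)

lemma opnorm_symmetric_le:
  fixes A :: "real^'n^'n"
  assumes symm: "transpose A = A" and unit_bound: "\<And>v. norm v = 1 \<Longrightarrow> \<bar>v \<bullet> (A *v v)\<bar> \<le> M"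
  shows "opnorm A \<le> M"
proof -
  have form_bound: "\<bar>v \<bullet> (A *v v)\<bar> \<le> M * norm v ^ 2" for v
  proof (cases "v = 0")
    case False
    have "\<bar>((1 / norm v) *\<^sub>R v) \<bullet> (A *v ((1 / norm v) *\<^sub>R v))\<bar> \<le> M"
      using False by (intro unit_bound) simp
    then show ?thesis
      using False by (simp add: matrix_vector_mult_scaleR abs_mult field_simps power2_eq_square)
  qed simp
  have polarization: "4 * (u \<bullet> (A *v w)) = (u + w) \<bullet> (A *v (u + w)) - (u - w) \<bullet> (A *v (u - w))" for u w
    using inner_matrix_vector_commute[OF symm, of w u]
    by (simp add: matrix_vector_right_distrib matrix_vector_mult_diff_distrib inner_add_left
        inner_add_right inner_diff_left inner_diff_right)
  have unit_pair: "u \<bullet> (A *v w) \<le> M" if "norm u = 1" "norm w = 1" for u w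
  proof -
    have "4 * (u \<bullet> (A *v w)) \<le> M * norm (u + w) ^ 2 + M * norm (u - w) ^ 2"
      unfolding polarization using form_bound[of "u + w"] form_bound[of "u - w"] by linarith
    also have "\<dots> = 4 * M"
      using that[unfolded norm_eq_1] by (simp add: power2_norm_eq_inner inner_add_left inner_add_right inner_diff_left
          inner_diff_right inner_commute algebra_simps)
    finally show ?thesis by simp
  qed
  show ?thesis
  proof (rule opnorm_le)
    fix v :: "real^'n"
    show "norm (A *v v) \<le> M * norm v"
    proof (cases "A *v v = 0")
      case True
      obtain i :: 'n where True by simp
      have "0 \<le> M" using unit_bound[of "axis i 1"] by simp
      then show ?thesis using True by simp
    next
      case False
      then have "v \<noteq> 0" by auto
      have "norm (A *v v) / norm v = ((1 / norm (A *v v)) *\<^sub>R (A *v v)) \<bullet> (A *v ((1 / norm v) *\<^sub>R v))"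
        using False by (simp add: matrix_vector_mult_scaleR power2_norm_eq_inner[symmetric] power2_eq_square)
      also have "\<dots> \<le> M"
        using False \<open>v \<noteq> 0\<close> by (intro unit_pair) simp_all
      finally show ?thesis using \<open>v \<noteq> 0\<close> by (simp add: field_simps)
    qed
  qed
qed

section \<open>Quadratic functions\<close>

lemma quad_diff: "quad c g H x w - quad c' g' H' x w = quad (c - c') (g - g') (H - H') x w"
  unfolding quad_def
  by (simp add: inner_diff_left matrix_vector_mult_diff_rdistrib inner_diff_right right_diff_distrib)

lemma quad_along_line: "quad a b A x (x + t *\<^sub>R v) = a + t * (b \<bullet> v) + t^2 / 2 * (v \<bullet> (A *v v))"
  by (simp add: quad_def matrix_vector_mult_scaleR power2_eq_square)

lemma norm_linear_coeff_le_if_quad_bounded: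
  assumes "0 < \<Delta>" and bounded: "\<And>z. z \<in> cball x \<Delta> \<Longrightarrow> \<bar>quad a b A x z\<bar> \<le> \<epsilon>"
  shows "norm b \<le> \<epsilon> / \<Delta>"
proof (cases "b = 0")
  case True
  have "0 \<le> \<epsilon>" using bounded[of x] \<open>0 < \<Delta>\<close> by simp
  then show ?thesis using True \<open>0 < \<Delta>\<close> by simp
next
  case False
  define v where "v = (1 / norm b) *\<^sub>R b"
  have "norm v = 1" "b \<bullet> v = norm b"
    using False by (simp_all add: v_def power2_norm_eq_inner[symmetric] power2_eq_square)
  then have "2 * \<Delta> * norm b = quad a b A x (x + \<Delta> *\<^sub>R v) - quad a b A x (x + (-\<Delta>) *\<^sub>R v)"
    unfolding quad_along_line by (simp add: power2_eq_square algebra_simps)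
  also have "\<dots> \<le> 2 * \<epsilon>"
    using bounded[of "x + \<Delta> *\<^sub>R v"] bounded[of "x + (-\<Delta>) *\<^sub>R v"] \<open>norm v = 1\<close> \<open>0 < \<Delta>\<close>
    by (simp add: dist_norm abs_le_iff)
  finally show ?thesis using \<open>0 < \<Delta>\<close> by (simp add: field_simps)
qed

lemma opnorm_quadratic_coeff_le_if_quad_bounded:
  fixes A :: "real^'n^'n"
  assumes "0 < \<Delta>" and "transpose A = A"
    and bounded: "\<And>z. z \<in> cball x \<Delta> \<Longrightarrow> \<bar>quad a b A x z\<bar> \<le> \<epsilon>"
  shows "opnorm A \<le> 4 * \<epsilon> / \<Delta>^2"
proof (rule opnorm_symmetric_le[OF \<open>transpose A = A\<close>])
  fix v :: "real^'n" assume "norm v = 1"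
  have "\<Delta>^2 * (v \<bullet> (A *v v))
      = quad a b A x (x + \<Delta> *\<^sub>R v) + quad a b A x (x + (-\<Delta>) *\<^sub>R v) - 2 * quad a b A x (x + 0 *\<^sub>R v)"
    unfolding quad_along_line by (simp add: power2_eq_square algebra_simps)
  also have "\<bar>\<dots>\<bar> \<le> 4 * \<epsilon>"
    using bounded[of "x + \<Delta> *\<^sub>R v"] bounded[of "x + (-\<Delta>) *\<^sub>R v"] bounded[of x]
      \<open>norm v = 1\<close> \<open>0 < \<Delta>\<close>
    by (simp add: dist_norm abs_le_iff)
  finally show "\<bar>v \<bullet> (A *v v)\<bar> \<le> 4 * \<epsilon> / \<Delta>^2"
    using \<open>0 < \<Delta>\<close> by (simp add: abs_mult field_simps)
qed

section \<open>Quadratic interpolation\<close>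

definition qspan :: "real^'n::finite \<Rightarrow> real \<Rightarrow> (real^'n \<Rightarrow> real) \<Rightarrow> bool" where
  "qspan x \<Delta> F \<longleftrightarrow> (\<exists>\<theta>. \<forall>w. F w = (\<Sum>b\<in>qbasis. \<theta> b * phi ((1 / \<Delta>) *\<^sub>R (w - x)) b))"

lemma finite_qbasis: "finite (qbasis :: 'n::finite qidx set)"
proof -
  have "{QQ {i, j} | i j. True} = (\<lambda>(i::'n, j). QQ {i, j}) ` UNIV" by auto
  then show ?thesis unfolding qbasis_def by simp
qed

lemma qspan_basis_elem:
  assumes "b \<in> qbasis"
  shows "qspan x \<Delta> (\<lambda>w. a * phi ((1 / \<Delta>) *\<^sub>R (w - x)) b)"
proof -
  have "(\<Sum>b'\<in>qbasis. (if b' = b then a else 0) * phi u b') = (\<Sum>b'\<in>qbasis. if b' = b then a * phi u b' else 0)"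
    for u by (rule sum.cong) auto
  then show ?thesis
    unfolding qspan_def using assms
    by (intro exI[of _ "\<lambda>b'. if b' = b then a else 0"]) (simp add: finite_qbasis)
qed

lemma qspan_add:
  assumes "qspan x \<Delta> F" "qspan x \<Delta> G"
  shows "qspan x \<Delta> (\<lambda>w. F w + G w)"
proof -
  obtain \<theta>\<^sub>F \<theta>\<^sub>G where "\<forall>w. F w = (\<Sum>b\<in>qbasis. \<theta>\<^sub>F b * phi ((1 / \<Delta>) *\<^sub>R (w - x)) b)"
    and "\<forall>w. G w = (\<Sum>b\<in>qbasis. \<theta>\<^sub>G b * phi ((1 / \<Delta>) *\<^sub>R (w - x)) b)"
    using assms unfolding qspan_def by blast
  then show ?thesis
    unfolding qspan_def by (intro exI[of _ "\<lambda>b. \<theta>\<^sub>F b + \<theta>\<^sub>G b"]) (simp add: sum.distrib distrib_right)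
qed

lemma qspan_scale:
  assumes "qspan x \<Delta> F"
  shows "qspan x \<Delta> (\<lambda>w. a * F w)"
proof -
  obtain \<theta> where "\<forall>w. F w = (\<Sum>b\<in>qbasis. \<theta> b * phi ((1 / \<Delta>) *\<^sub>R (w - x)) b)"
    using assms unfolding qspan_def by blast
  then show ?thesis
    unfolding qspan_def by (intro exI[of _ "\<lambda>b. a * \<theta> b"]) (simp add: sum_distrib_left mult.assoc)
qed

lemma qspan_diff: "qspan x \<Delta> F \<Longrightarrow> qspan x \<Delta> G \<Longrightarrow> qspan x \<Delta> (\<lambda>w. F w - G w)"
  using qspan_add[of x \<Delta> F "\<lambda>w. (-1) * G w"] qspan_scale[of x \<Delta> G "-1"] by simp

lemma qspan_sum:
  "finite I \<Longrightarrow> (\<And>i. i \<in> I \<Longrightarrow> qspan x \<Delta> (F i)) \<Longrightarrow> qspan x \<Delta> (\<lambda>w. \<Sum>i\<in>I. F i w)"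
proof (induction I rule: finite_induct)
  case empty
  show ?case unfolding qspan_def by (rule exI[of _ "\<lambda>b. 0"]) simp
next
  case (insert a I)
  then show ?case by (simp add: qspan_add)
qed

lemma phi_QQ_product: "(if i = j then 2 else 1) * phi u (QQ {i, j}) = u $ i * u $ j"
  by (cases "i = j") (auto simp: power2_eq_square)

lemma qspan_quad:
  assumes "\<Delta> \<noteq> 0"
  shows "qspan x \<Delta> (quad c g H x)"
proof -
  define u where "u w = (1 / \<Delta>) *\<^sub>R (w - x)" for w
  have wx: "w - x = \<Delta> *\<^sub>R u w" for w using assms by (simp add: u_def)
  have quad_eq: "quad c g H x = (\<lambda>w. c * phi (u w) QC + (\<Sum>i\<in>UNIV. (\<Delta> * g $ i) * phi (u w) (QL i))
      + (\<Sum>i\<in>UNIV. \<Sum>j\<in>UNIV. (\<Delta>^2 / 2 * H $ i $ j * (if i = j then 2 else 1)) * phi (u w) (QQ {i, j})))"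
    (is "_ = ?expansion")
  proof (rule ext)
    fix w
    have "g \<bullet> (w - x) = (\<Sum>i\<in>UNIV. (\<Delta> * g $ i) * phi (u w) (QL i))"
      unfolding wx by (simp add: inner_vec_def sum_distrib_left algebra_simps)
    moreover have "1/2 * ((w - x) \<bullet> (H *v (w - x)))
        = (\<Sum>i\<in>UNIV. \<Sum>j\<in>UNIV. (\<Delta>^2 / 2 * H $ i $ j * (if i = j then 2 else 1)) * phi (u w) (QQ {i, j}))"
      unfolding wx mult.assoc phi_QQ_product
      by (simp add: inner_vec_def matrix_vector_mult_def sum_distrib_left power2_eq_square algebra_simps)
    ultimately show "quad c g H x w = ?expansion w"
      by (simp add: quad_def)
  qed
  show ?thesis
    unfolding quad_eq u_def by (intro qspan_add qspan_sum qspan_basis_elem) (auto simp: qbasis_def)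
qed

lemma qspan_eq_0_if_vanishes_at_nodes:
  assumes "qmat_invertible (Qhat x \<Delta> y)" and "qspan x \<Delta> F" and "\<And>k. F (y k) = 0"
  shows "F w = 0"
proof -
  obtain \<theta> where \<theta>: "\<And>w. F w = (\<Sum>b\<in>qbasis. \<theta> b * phi ((1 / \<Delta>) *\<^sub>R (w - x)) b)"
    using assms(2) unfolding qspan_def by blast
  obtain R where R: "\<And>b b'. b \<in> qbasis \<Longrightarrow> b' \<in> qbasis \<Longrightarrow>
      (\<Sum>k\<in>UNIV. R b k * Qhat x \<Delta> y k b') = (if b = b' then 1 else 0)"
    using assms(1) unfolding qmat_invertible_def by blast
  have "\<theta> b = 0" if "b \<in> qbasis" for b
  proof -
    have "\<theta> b = (\<Sum>b'\<in>qbasis. if b = b' then \<theta> b' else 0)"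
      using that by (simp add: finite_qbasis)
    also have "\<dots> = (\<Sum>b'\<in>qbasis. (if b = b' then 1 else 0) * \<theta> b')"
      by (rule sum.cong) auto
    also have "\<dots> = (\<Sum>b'\<in>qbasis. (\<Sum>k\<in>UNIV. R b k * Qhat x \<Delta> y k b') * \<theta> b')"
      using R that by (intro sum.cong) auto
    also have "\<dots> = (\<Sum>k\<in>UNIV. R b k * (\<Sum>b'\<in>qbasis. \<theta> b' * Qhat x \<Delta> y k b'))"
      by (simp add: sum_distrib_right sum_distrib_left sum.swap[of _ qbasis] algebra_simps)
    also have "\<dots> = (\<Sum>k\<in>UNIV. R b k * F (y k))"
      by (simp add: \<theta> Qhat_def)
    finally show ?thesis by (simp add: assms(3))
  qed
  then show ?thesis by (simp add: \<theta>)
qed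

lemma quad_lagrange_expansion:
  assumes "qmat_invertible (Qhat x \<Delta> y)" and "\<Delta> \<noteq> 0"
    and lagrange: "\<And>i j. quad (lc i) (lg i) (lH i) x (y j) = (if i = j then 1 else 0)"
  shows "quad a b A x w = (\<Sum>i\<in>UNIV. quad a b A x (y i) * quad (lc i) (lg i) (lH i) x w)"
proof -
  have "quad a b A x w - (\<Sum>i\<in>UNIV. quad a b A x (y i) * quad (lc i) (lg i) (lH i) x w) = 0"
  proof (rule qspan_eq_0_if_vanishes_at_nodes[OF assms(1)])
    show "qspan x \<Delta> (\<lambda>w. quad a b A x w - (\<Sum>i\<in>UNIV. quad a b A x (y i) * quad (lc i) (lg i) (lH i) x w))"
      using \<open>\<Delta> \<noteq> 0\<close> by (intro qspan_diff qspan_sum qspan_scale qspan_quad) auto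
    have "(\<Sum>i\<in>UNIV. quad a b A x (y i) * quad (lc i) (lg i) (lH i) x (y k))
        = (\<Sum>i\<in>UNIV. if i = k then quad a b A x (y i) else 0)" for k
      by (rule sum.cong) (auto simp: lagrange)
    then show "quad a b A x (y k) - (\<Sum>i\<in>UNIV. quad a b A x (y i) * quad (lc i) (lg i) (lH i) x (y k)) = 0" for k
      by simp
  qed
  then show ?thesis by simp
qed

lemma abs_quad_le_lagrange_bound:
  assumes "qmat_invertible (Qhat x \<Delta> y)" and "\<Delta> \<noteq> 0"
    and "\<And>i j. quad (lc i) (lg i) (lH i) x (y j) = (if i = j then 1 else 0)"
    and nodes: "\<And>i. \<bar>quad a b A x (y i)\<bar> \<le> \<epsilon>"
    and lebesgue: "(\<Sum>i\<in>UNIV. \<bar>quad (lc i) (lg i) (lH i) x w\<bar>) \<le> \<Lambda>"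
  shows "\<bar>quad a b A x w\<bar> \<le> \<epsilon> * \<Lambda>"
proof -
  obtain k :: 'a where True by simp
  have "0 \<le> \<epsilon>" using nodes[of k] by linarith
  have "\<bar>quad a b A x w\<bar> = \<bar>\<Sum>i\<in>UNIV. quad a b A x (y i) * quad (lc i) (lg i) (lH i) x w\<bar>"
    by (rule arg_cong[OF quad_lagrange_expansion[OF assms(1-3)]])
  also have "\<dots> \<le> (\<Sum>i\<in>UNIV. \<bar>quad a b A x (y i)\<bar> * \<bar>quad (lc i) (lg i) (lH i) x w\<bar>)"
    unfolding abs_mult[symmetric] by (rule sum_abs)
  also have "\<dots> \<le> (\<Sum>i\<in>UNIV. \<epsilon> * \<bar>quad (lc i) (lg i) (lH i) x w\<bar>)"
    by (intro sum_mono mult_right_mono nodes abs_ge_zero)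
  also have "\<dots> \<le> \<epsilon> * \<Lambda>"
    unfolding sum_distrib_left[symmetric] using lebesgue \<open>0 \<le> \<epsilon>\<close> by (rule mult_left_mono)
  finally show ?thesis .
qed

section \<open>Functions with Lipschitz continuous Hessian\<close>

lemma abs_diff_le_majorant_diff:
  fixes h h' K k :: "real \<Rightarrow> real"
  assumes "a \<le> b"
    and h: "\<And>t. a \<le> t \<Longrightarrow> t \<le> b \<Longrightarrow> (h has_real_derivative h' t) (at t)"
    and K: "\<And>t. a \<le> t \<Longrightarrow> t \<le> b \<Longrightarrow> (K has_real_derivative k t) (at t)"
    and dominated: "\<And>t. a \<le> t \<Longrightarrow> t \<le> b \<Longrightarrow> \<bar>h' t\<bar> \<le> k t"
  shows "\<bar>h b - h a\<bar> \<le> K b - K a"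
proof -
  have "K a - h a \<le> K b - h b"
  proof (rule DERIV_nonneg_imp_nondecreasing[OF \<open>a \<le> b\<close>])
    fix t assume t: "a \<le> t" "t \<le> b"
    have "((\<lambda>t. K t - h t) has_real_derivative k t - h' t) (at t)"
      using K[OF t] h[OF t] by (rule DERIV_diff)
    moreover have "0 \<le> k t - h' t" using dominated[OF t] by linarith
    ultimately show "\<exists>y. ((\<lambda>t. K t - h t) has_real_derivative y) (at t) \<and> 0 \<le> y" by blast
  qed
  moreover have "K a + h a \<le> K b + h b"
  proof (rule DERIV_nonneg_imp_nondecreasing[OF \<open>a \<le> b\<close>])
    fix t assume t: "a \<le> t" "t \<le> b"
    have "((\<lambda>t. K t + h t) has_real_derivative k t + h' t) (at t)"
      using K[OF t] h[OF t] by (rule DERIV_add)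
    moreover have "0 \<le> k t + h' t" using dominated[OF t] by linarith
    ultimately show "\<exists>y. ((\<lambda>t. K t + h t) has_real_derivative y) (at t) \<and> 0 \<le> y" by blast
  qed
  ultimately show ?thesis by linarith
qed

locale lipschitz_hessian =
  fixes f :: "real^'n \<Rightarrow> real"
    and gradf :: "real^'n \<Rightarrow> real^'n"
    and hessf :: "real^'n \<Rightarrow> real^'n^'n"
    and L :: real
  assumes grad: "\<And>z. (f has_derivative (\<lambda>h. gradf z \<bullet> h)) (at z)"
    and hess: "\<And>z. (gradf has_derivative (\<lambda>h. hessf z *v h)) (at z)"
    and hess_lip: "\<And>u v. opnorm (hessf u - hessf v) \<le> L * norm (u - v)"
begin

lemma lipschitz_const_nonneg: "0 \<le> L"
proof -
  obtain i :: 'n where True by simp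
  have "0 \<le> opnorm (hessf 0 - hessf (axis i 1))" by (rule opnorm_nonneg)
  also have "\<dots> \<le> L * norm (0 - axis i (1::real))" by (rule hess_lip)
  finally show ?thesis by (simp add: zero_le_mult_iff)
qed

lemma has_real_derivative_along_line:
  "((\<lambda>t. f (p + t *\<^sub>R d)) has_real_derivative (gradf (p + t *\<^sub>R d) \<bullet> d)) (at t)"
proof -
  have "((\<lambda>t. p + t *\<^sub>R d) has_derivative (\<lambda>s. s *\<^sub>R d)) (at t)"
    by (auto intro!: derivative_eq_intros)
  from diff_chain_at[OF this grad] show ?thesis
    unfolding has_field_derivative_def o_def by (rule has_derivative_eq_rhs) (auto simp: fun_eq_iff)
qed

lemma gradient_has_real_derivative_along_line:
  "((\<lambda>t. e \<bullet> gradf (p + t *\<^sub>R d)) has_real_derivative (e \<bullet> (hessf (p + t *\<^sub>R d) *v d))) (at t)"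
proof -
  have "((\<lambda>t. p + t *\<^sub>R d) has_derivative (\<lambda>s. s *\<^sub>R d)) (at t)"
    by (auto intro!: derivative_eq_intros)
  from bounded_linear.has_derivative[OF bounded_linear_inner_right[of e] diff_chain_at[OF this hess]]
  show ?thesis
    unfolding has_field_derivative_def o_def
    by (rule has_derivative_eq_rhs) (auto simp: fun_eq_iff matrix_vector_mult_scaleR)
qed

lemma gradient_taylor_remainder:
  "norm (gradf (p + d) - gradf p - hessf p *v d) \<le> L / 2 * norm d ^ 2"
proof -
  define e where "e = gradf (p + d) - gradf p - hessf p *v d"
  define a where "a = e \<bullet> (hessf p *v d)"
  have "\<bar>(e \<bullet> gradf (p + 1 *\<^sub>R d) - 1 * a) - (e \<bullet> gradf (p + 0 *\<^sub>R d) - 0 * a)\<bar>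
     \<le> norm e * L * norm d ^ 2 * 1^2 / 2 - norm e * L * norm d ^ 2 * 0^2 / 2"
  proof (rule abs_diff_le_majorant_diff)
    fix t :: real assume t: "0 \<le> t" "t \<le> 1"
    show "((\<lambda>t. e \<bullet> gradf (p + t *\<^sub>R d) - t * a) has_real_derivative
        (e \<bullet> (hessf (p + t *\<^sub>R d) *v d) - a)) (at t)"
      by (auto intro!: derivative_eq_intros gradient_has_real_derivative_along_line)
    show "((\<lambda>t. norm e * L * norm d ^ 2 * t^2 / 2) has_real_derivative
        (norm e * L * norm d ^ 2 * t)) (at t)"
      by (auto intro!: derivative_eq_intros)
    have "\<bar>e \<bullet> ((hessf (p + t *\<^sub>R d) - hessf p) *v d)\<bar>
        \<le> norm e * (opnorm (hessf (p + t *\<^sub>R d) - hessf p) * norm d)"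
      by (rule order_trans[OF Cauchy_Schwarz_ineq2 mult_left_mono[OF norm_matrix_vector_le_opnorm]]) simp
    also have "\<dots> \<le> norm e * ((L * norm (p + t *\<^sub>R d - p)) * norm d)"
      by (intro mult_left_mono mult_right_mono hess_lip) auto
    finally show "\<bar>e \<bullet> (hessf (p + t *\<^sub>R d) *v d) - a\<bar> \<le> norm e * L * norm d ^ 2 * t"
      using t by (simp add: a_def matrix_vector_mult_diff_rdistrib inner_diff_right power2_eq_square mult_ac)
  qed simp
  moreover have "(e \<bullet> gradf (p + 1 *\<^sub>R d) - 1 * a) - (e \<bullet> gradf (p + 0 *\<^sub>R d) - 0 * a) = norm e ^ 2"
    by (simp add: a_def power2_norm_eq_inner inner_diff_right[symmetric]) (simp add: e_def algebra_simps)
  ultimately have "norm e * norm e \<le> norm e * (L / 2 * norm d ^ 2)"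
    by (simp add: power2_eq_square)
  then show ?thesis
    using lipschitz_const_nonneg by (cases "e = 0") (auto simp: e_def)
qed

lemma taylor_remainder:
  "\<bar>f z - quad (f p) (gradf p) (hessf p) p z\<bar> \<le> L / 6 * norm (z - p) ^ 3"
proof -
  define d where "d = z - p"
  define a where "a = gradf p \<bullet> d"
  define b where "b = d \<bullet> (hessf p *v d)"
  have "\<bar>(f (p + 1 *\<^sub>R d) - 1 * a - 1^2/2 * b) - (f (p + 0 *\<^sub>R d) - 0 * a - 0^2/2 * b)\<bar>
     \<le> L / 6 * norm d ^ 3 * 1 ^ 3 - L / 6 * norm d ^ 3 * 0 ^ 3"
  proof (rule abs_diff_le_majorant_diff)
    fix t :: real assume t: "0 \<le> t" "t \<le> 1"
    show "((\<lambda>t. f (p + t *\<^sub>R d) - t * a - t^2/2 * b) has_real_derivative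
        (gradf (p + t *\<^sub>R d) \<bullet> d - a - t * b)) (at t)"
      by (auto intro!: derivative_eq_intros has_real_derivative_along_line)
    show "((\<lambda>t. L / 6 * norm d ^ 3 * t ^ 3) has_real_derivative (L / 2 * norm d ^ 3 * t^2)) (at t)"
      by (auto intro!: derivative_eq_intros simp: power2_eq_square)
    have "gradf (p + t *\<^sub>R d) \<bullet> d - a - t * b
        = d \<bullet> (gradf (p + t *\<^sub>R d) - gradf p - hessf p *v (t *\<^sub>R d))"
      by (simp add: a_def b_def matrix_vector_mult_scaleR inner_diff_right inner_commute)
    also have "\<bar>\<dots>\<bar> \<le> norm d * (L / 2 * norm (t *\<^sub>R d) ^ 2)"
      by (rule order_trans[OF Cauchy_Schwarz_ineq2 mult_left_mono[OF gradient_taylor_remainder]]) simp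
    finally show "\<bar>gradf (p + t *\<^sub>R d) \<bullet> d - a - t * b\<bar> \<le> L / 2 * norm d ^ 3 * t^2"
      using t by (simp add: power2_eq_square power3_eq_cube mult_ac)
  qed simp
  then show ?thesis
    by (simp add: a_def b_def d_def quad_def algebra_simps)
qed

text \<open>Symmetry of the Hessian is not assumed: the second difference
  f(p + s v + s u) - f(p + s u) - f(p + s v) + f(p) is symmetric in u and v and equals
  s^2 u^T (hessf p) v up to O(s^3).\<close>

lemma mixed_second_difference:
  assumes "0 \<le> s"
  shows "\<bar>f (p + s *\<^sub>R v + s *\<^sub>R u) - f (p + s *\<^sub>R u) - f (p + s *\<^sub>R v) + f p
           - s^2 * (u \<bullet> (hessf p *v v))\<bar>
         \<le> (norm u * L / 2 * norm v ^ 2 + L * norm u ^ 2 * norm v) * s ^ 3"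
proof -
  define C where "C = norm u * L / 2 * norm v ^ 2 + L * norm u ^ 2 * norm v"
  define a where "a = s * (u \<bullet> (hessf p *v v))"
  have "\<bar>(f ((p + s *\<^sub>R v) + s *\<^sub>R u) - f (p + s *\<^sub>R u) - s * a)
          - (f ((p + s *\<^sub>R v) + 0 *\<^sub>R u) - f (p + 0 *\<^sub>R u) - 0 * a)\<bar>
        \<le> C * s^2 * s - C * s^2 * 0"
  proof (rule abs_diff_le_majorant_diff[OF \<open>0 \<le> s\<close>])
    fix t :: real assume t: "0 \<le> t" "t \<le> s"
    show "((\<lambda>t. f ((p + s *\<^sub>R v) + t *\<^sub>R u) - f (p + t *\<^sub>R u) - t * a) has_real_derivative
        (gradf ((p + s *\<^sub>R v) + t *\<^sub>R u) \<bullet> u - gradf (p + t *\<^sub>R u) \<bullet> u - a)) (at t)"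
      by (auto intro!: derivative_eq_intros has_real_derivative_along_line)
    show "((\<lambda>t. C * s^2 * t) has_real_derivative (C * s^2)) (at t)"
      by (auto intro!: derivative_eq_intros)
    define r where "r = p + t *\<^sub>R u"
    have "gradf ((p + s *\<^sub>R v) + t *\<^sub>R u) \<bullet> u - gradf (p + t *\<^sub>R u) \<bullet> u - a
      = u \<bullet> (gradf (r + s *\<^sub>R v) - gradf r - hessf r *v (s *\<^sub>R v))
        + s * (u \<bullet> ((hessf r - hessf p) *v v))"
      by (simp add: a_def r_def matrix_vector_mult_scaleR inner_diff_right
          matrix_vector_mult_diff_rdistrib inner_commute algebra_simps)
    also have "\<bar>\<dots>\<bar> \<le> norm u * (L / 2 * norm (s *\<^sub>R v) ^ 2) + s * (norm u * (L * norm (r - p) * norm v))"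
    proof (rule order_trans[OF abs_triangle_ineq add_mono])
      show "\<bar>u \<bullet> (gradf (r + s *\<^sub>R v) - gradf r - hessf r *v (s *\<^sub>R v))\<bar>
          \<le> norm u * (L / 2 * norm (s *\<^sub>R v) ^ 2)"
        by (rule order_trans[OF Cauchy_Schwarz_ineq2 mult_left_mono[OF gradient_taylor_remainder]]) simp
      have "\<bar>u \<bullet> ((hessf r - hessf p) *v v)\<bar> \<le> norm u * (opnorm (hessf r - hessf p) * norm v)"
        by (rule order_trans[OF Cauchy_Schwarz_ineq2 mult_left_mono[OF norm_matrix_vector_le_opnorm]]) simp
      also have "\<dots> \<le> norm u * (L * norm (r - p) * norm v)"
        by (intro mult_left_mono mult_right_mono hess_lip) auto
      finally show "\<bar>s * (u \<bullet> ((hessf r - hessf p) *v v))\<bar> \<le> s * (norm u * (L * norm (r - p) * norm v))"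
        using \<open>0 \<le> s\<close> by (simp add: abs_mult mult_left_mono)
    qed
    also have "\<dots> \<le> norm u * (L / 2 * (s * norm v) ^ 2) + s * (norm u * (L * (s * norm u) * norm v))"
      using t \<open>0 \<le> s\<close> lipschitz_const_nonneg
      by (intro add_mono mult_left_mono mult_right_mono) (auto simp: r_def mult_right_mono)
    also have "\<dots> = C * s^2" by (simp add: C_def power2_eq_square algebra_simps)
    finally show "\<bar>gradf ((p + s *\<^sub>R v) + t *\<^sub>R u) \<bullet> u - gradf (p + t *\<^sub>R u) \<bullet> u - a\<bar> \<le> C * s^2" .
  qed
  then show ?thesis by (simp add: a_def C_def power2_eq_square power3_eq_cube algebra_simps)
qed

lemma hessian_inner_commute: "u \<bullet> (hessf p *v v) = v \<bullet> (hessf p *v u)"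
proof -
  define C where "C = (norm u * L / 2 * norm v ^ 2 + L * norm u ^ 2 * norm v)
                    + (norm v * L / 2 * norm u ^ 2 + L * norm v ^ 2 * norm u)"
  have "0 \<le> C" using lipschitz_const_nonneg by (simp add: C_def)
  have small: "\<bar>u \<bullet> (hessf p *v v) - v \<bullet> (hessf p *v u)\<bar> \<le> C * s" if "0 < s" for s
  proof -
    have "p + s *\<^sub>R u + s *\<^sub>R v = p + s *\<^sub>R v + s *\<^sub>R u" by (simp add: algebra_simps)
    then have "\<bar>s^2 * (u \<bullet> (hessf p *v v)) - s^2 * (v \<bullet> (hessf p *v u))\<bar> \<le> C * s^3"
      using mixed_second_difference[of s p v u] mixed_second_difference[of s p u v] that
      by (simp add: C_def abs_le_iff algebra_simps)
    then have "s^2 * \<bar>u \<bullet> (hessf p *v v) - v \<bullet> (hessf p *v u)\<bar> \<le> s^2 * (C * s)"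
      by (simp add: abs_mult right_diff_distrib[symmetric] power2_eq_square power3_eq_cube mult_ac)
    then show ?thesis using that by simp
  qed
  have "\<bar>u \<bullet> (hessf p *v v) - v \<bullet> (hessf p *v u)\<bar> \<le> 0 + e" if "0 < e" for e
  proof -
    have "\<bar>u \<bullet> (hessf p *v v) - v \<bullet> (hessf p *v u)\<bar> \<le> C * (e / (C + 1))"
      using small[of "e / (C + 1)"] \<open>0 \<le> C\<close> that by simp
    also have "\<dots> \<le> e" using \<open>0 \<le> C\<close> that by (simp add: field_simps)
    finally show ?thesis by simp
  qed
  then have "\<bar>u \<bullet> (hessf p *v v) - v \<bullet> (hessf p *v u)\<bar> \<le> 0" by (rule field_le_epsilon)
  then show ?thesis by simp
qed

lemma transpose_hessian: "transpose (hessf p) = hessf p"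
proof -
  have "hessf p $ i $ j = axis i 1 \<bullet> (hessf p *v axis j 1)" for i j
    by (simp add: matrix_vector_mult_basis inner_axis' column_def)
  then show ?thesis
    using hessian_inner_commute by (simp add: vec_eq_iff transpose_def)
qed

lemma quadratic_model_error_bounds:
  assumes "0 < \<Delta>" and "transpose H = H"
    and close: "\<And>z. z \<in> cball x \<Delta> \<Longrightarrow> \<bar>quad c g H x z - quad (f x) (gradf x) (hessf x) x z\<bar> \<le> \<epsilon>"
    and z: "z \<in> cball x \<Delta>"
  shows "\<bar>quad c g H x z - f z\<bar> \<le> \<epsilon> + L / 6 * \<Delta>^3"
    and "norm ((g + H *v (z - x)) - gradf z) \<le> 5 * \<epsilon> / \<Delta> + L / 2 * \<Delta>^2"
    and "opnorm (H - hessf z) \<le> 4 * \<epsilon> / \<Delta>^2 + L * \<Delta>"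
proof -
  have dist_z: "norm (z - x) \<le> \<Delta>" using z by (simp add: dist_norm norm_minus_commute)
  have error_bounded: "\<bar>quad (c - f x) (g - gradf x) (H - hessf x) x w\<bar> \<le> \<epsilon>" if "w \<in> cball x \<Delta>" for w
    using close[OF that] by (simp add: quad_diff)
  have "transpose (H - hessf x) = H - hessf x"
    using \<open>transpose H = H\<close> transpose_hessian[of x] by (simp add: transpose_def vec_eq_iff)
  note coeff_bounds =
    norm_linear_coeff_le_if_quad_bounded[OF \<open>0 < \<Delta>\<close> error_bounded]
    opnorm_quadratic_coeff_le_if_quad_bounded[OF \<open>0 < \<Delta>\<close> this error_bounded]
  have "\<bar>f z - quad (f x) (gradf x) (hessf x) x z\<bar> \<le> L / 6 * norm (z - x) ^ 3"
    by (rule taylor_remainder)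
  also have "\<dots> \<le> L / 6 * \<Delta>^3"
    using lipschitz_const_nonneg dist_z by (intro mult_left_mono power_mono) auto
  finally show "\<bar>quad c g H x z - f z\<bar> \<le> \<epsilon> + L / 6 * \<Delta>^3"
    using close[OF z] by linarith
  have split: "(g + H *v (z - x)) - gradf z
      = (g - gradf x) + (H - hessf x) *v (z - x) - (gradf (x + (z - x)) - gradf x - hessf x *v (z - x))"
    by (simp add: matrix_vector_mult_diff_rdistrib)
  have "norm ((g + H *v (z - x)) - gradf z)
      \<le> norm (g - gradf x) + norm ((H - hessf x) *v (z - x))
        + norm (gradf (x + (z - x)) - gradf x - hessf x *v (z - x))"
    unfolding split using norm_triangle_ineq4[of "(g - gradf x) + (H - hessf x) *v (z - x)"
        "gradf (x + (z - x)) - gradf x - hessf x *v (z - x)"]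
      norm_triangle_ineq[of "g - gradf x" "(H - hessf x) *v (z - x)"]
    by linarith
  also have "\<dots> \<le> \<epsilon> / \<Delta> + 4 * \<epsilon> / \<Delta>^2 * \<Delta> + L / 2 * norm (z - x) ^ 2"
  proof (intro add_mono coeff_bounds(1) gradient_taylor_remainder)
    show "norm ((H - hessf x) *v (z - x)) \<le> 4 * \<epsilon> / \<Delta>^2 * \<Delta>"
      using order_trans[OF opnorm_nonneg coeff_bounds(2)] dist_z
      by (intro order_trans[OF norm_matrix_vector_le_opnorm] mult_mono coeff_bounds(2)) auto
  qed
  also have "\<dots> \<le> \<epsilon> / \<Delta> + 4 * \<epsilon> / \<Delta>^2 * \<Delta> + L / 2 * \<Delta>^2"
    using lipschitz_const_nonneg dist_z by (intro add_left_mono mult_left_mono power_mono) auto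
  also have "\<dots> = 5 * \<epsilon> / \<Delta> + L / 2 * \<Delta>^2"
    using \<open>0 < \<Delta>\<close> by (simp add: field_simps power2_eq_square)
  finally show "norm ((g + H *v (z - x)) - gradf z) \<le> 5 * \<epsilon> / \<Delta> + L / 2 * \<Delta>^2" .
  have "opnorm (H - hessf z) \<le> opnorm (H - hessf x) + opnorm (hessf x - hessf z)"
    using opnorm_add_le[of "H - hessf x" "hessf x - hessf z"] by simp
  also have "\<dots> \<le> 4 * \<epsilon> / \<Delta>^2 + L * norm (x - z)"
    by (intro add_mono coeff_bounds(2) hess_lip)
  also have "\<dots> \<le> 4 * \<epsilon> / \<Delta>^2 + L * \<Delta>"
    using lipschitz_const_nonneg dist_z by (simp add: norm_minus_commute mult_left_mono)
  finally show "opnorm (H - hessf z) \<le> 4 * \<epsilon> / \<Delta>^2 + L * \<Delta>" .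
qed


lemma interpolant_minus_taylor_bound:
  assumes "qmat_invertible (Qhat x \<Delta> y)" and "\<Delta> \<noteq> 0"
    and near: "\<And>k. norm (y k - x) \<le> r"
    and interp: "\<And>k. quad c g H x (y k) = f (y k)"
    and lagrange: "\<And>i j. quad (lc i) (lg i) (lH i) x (y j) = (if i = j then 1 else 0)"
    and lebesgue: "(\<Sum>i\<in>UNIV. \<bar>quad (lc i) (lg i) (lH i) x z\<bar>) \<le> \<Lambda>"
  shows "\<bar>quad c g H x z - quad (f x) (gradf x) (hessf x) x z\<bar> \<le> L / 6 * r^3 * \<Lambda>"
proof -
  have "\<bar>quad (c - f x) (g - gradf x) (H - hessf x) x (y k)\<bar> \<le> L / 6 * r^3" for k
  proof -
    have "\<bar>quad (c - f x) (g - gradf x) (H - hessf x) x (y k)\<bar> \<le> L / 6 * norm (y k - x) ^ 3"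
      using taylor_remainder[of "y k" x] interp[of k] by (simp add: quad_diff[symmetric])
    also have "\<dots> \<le> L / 6 * r^3"
      using lipschitz_const_nonneg near[of k] by (intro mult_left_mono power_mono) auto
    finally show ?thesis .
  qed
  from abs_quad_le_lagrange_bound[OF assms(1,2) lagrange this lebesgue] show ?thesis
    by (simp add: quad_diff)
qed

end

theorem theorem6p5:
  fixes f :: "real^'n \<Rightarrow> real"
    and gradf :: "real^'n \<Rightarrow> real^'n"
    and hessf :: "real^'n \<Rightarrow> real^'n^'n"
    and L \<beta> \<Delta> \<Lambda>\<^sub>1 :: real
    and x :: "real^'n"
    and y :: "'p::finite \<Rightarrow> real^'n"
    and c :: real and g :: "real^'n" and H :: "real^'n^'n"
    and lc :: "'p \<Rightarrow> real" and lg :: "'p \<Rightarrow> real^'n" and lH :: "'p \<Rightarrow> real^'n^'n"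
  assumes bdd_below: "\<exists>b. \<forall>z. b \<le> f z"
    and grad: "\<And>z. (f has_derivative (\<lambda>h. gradf z \<bullet> h)) (at z)"
    and hess: "\<And>z. (gradf has_derivative (\<lambda>h. hessf z *v h)) (at z)"
    and hess_cont: "continuous_on UNIV hessf"
    and hess_lip: "\<And>u v. opnorm (hessf u - hessf v) \<le> L * norm (u - v)"
    and Delta_pos: "\<Delta> > 0"
    and p_card: "CARD('p) = (CARD('n) + 1) * (CARD('n) + 2) div 2"
    and beta_pos: "\<beta> > 0"
    and y_near: "\<And>k. norm (y k - x) \<le> \<beta> * \<Delta>"
    and Q_inv: "qmat_invertible (Qhat x \<Delta> y)"
    and m_sym: "transpose H = H"
    and m_interp: "\<And>k. quad c g H x (y k) = f (y k)"
    and l_sym: "\<And>i. transpose (lH i) = lH i"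
    and l_lagr: "\<And>i j. quad (lc i) (lg i) (lH i) x (y j) = (if i = j then 1 else 0)"
    and Lambda: "\<And>z. z \<in> cball x \<Delta> \<Longrightarrow> (\<Sum>i\<in>UNIV. \<bar>quad (lc i) (lg i) (lH i) x z\<bar>) \<le> \<Lambda>\<^sub>1"
  shows "\<forall>z\<in>cball x \<Delta>.
      \<bar>quad c g H x z - f z\<bar> \<le> (L * \<beta>^3 * \<Lambda>\<^sub>1 / 6 + L / 6) * \<Delta>^3 \<and>
      norm ((g + H *v (z - x)) - gradf z) \<le> (17/3 * L * \<beta>^3 * \<Lambda>\<^sub>1 + L / 2) * \<Delta>^2 \<and>
      opnorm (H - hessf z) \<le> (4 * L * \<beta>^3 * \<Lambda>\<^sub>1 + L) * \<Delta>"
proof -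
  interpret lipschitz_hessian f gradf hessf L
    using grad hess hess_lip by unfold_locales
  define K where "K = L * \<beta>^3 * \<Lambda>\<^sub>1"
  have close: "\<bar>quad c g H x z - quad (f x) (gradf x) (hessf x) x z\<bar> \<le> K * \<Delta>^3 / 6"
    if "z \<in> cball x \<Delta>" for z
    using interpolant_minus_taylor_bound[OF Q_inv _ y_near m_interp l_lagr Lambda[OF that]] Delta_pos
    by (simp add: K_def power_mult_distrib mult_ac)
  have "0 \<le> \<Lambda>\<^sub>1"
    using Lambda[of x] Delta_pos by (meson centre_in_cball less_imp_le order_trans sum_nonneg abs_ge_zero)
  then have "0 \<le> K * \<Delta>^2" "0 \<le> K * \<Delta>"
    using lipschitz_const_nonneg beta_pos Delta_pos by (simp_all add: K_def)
  have rhs: "(L * \<beta>^3 * \<Lambda>\<^sub>1 / 6 + L / 6) * \<Delta>^3 = K * \<Delta>^3 / 6 + L / 6 * \<Delta>^3"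
    "(17/3 * L * \<beta>^3 * \<Lambda>\<^sub>1 + L / 2) * \<Delta>^2 = 5 * (K * \<Delta>^3 / 6) / \<Delta> + L / 2 * \<Delta>^2 + 29/6 * (K * \<Delta>^2)"
    "(4 * L * \<beta>^3 * \<Lambda>\<^sub>1 + L) * \<Delta> = 4 * (K * \<Delta>^3 / 6) / \<Delta>^2 + L * \<Delta> + 10/3 * (K * \<Delta>)"
    using Delta_pos by (simp_all add: K_def power2_eq_square power3_eq_cube field_simps)
  show ?thesis
  proof
    fix z assume "z \<in> cball x \<Delta>"
    from quadratic_model_error_bounds[OF Delta_pos m_sym close this] \<open>0 \<le> K * \<Delta>^2\<close> \<open>0 \<le> K * \<Delta>\<close>
    show "\<bar>quad c g H x z - f z\<bar> \<le> (L * \<beta>^3 * \<Lambda>\<^sub>1 / 6 + L / 6) * \<Delta>^3 \<and>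
      norm ((g + H *v (z - x)) - gradf z) \<le> (17/3 * L * \<beta>^3 * \<Lambda>\<^sub>1 + L / 2) * \<Delta>^2 \<and>
      opnorm (H - hessf z) \<le> (4 * L * \<beta>^3 * \<Lambda>\<^sub>1 + L) * \<Delta>"
      unfolding rhs by (intro conjI; linarith)
  qed
qed

end
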